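(* In the setting described in the context, assume that $D^pf$ is Lipschitz continuous (with respect to $\|\cdot\|_2$ on tensors), that $x_k\to x_*\in\mathbb{R}^n$ and $W_k\to W_*$ for some nonsingular $W_*\in\mathbb{R}^{n\times n}$, with $\sum_{k\ge0}\|x_k-x_*\|_2<\infty$ and $\sum_{k\ge0}\|W_k-W_*\|_2<\infty$. Then $\lim_{k\to\infty}\frac{\|(\mathcal{C}_k-D^pf(x_* ))[s_k]\|_F}{\|s_k\|_2}=0$.
   Context: Setting (higher-order secant update): $p\ge 2$; $f:\mathbb{R}^n\to\mathbb{R}$ is $p$ times continuously differentiable, $D^pf(x)$ denoting its $p$th derivative viewed as a symmetric multilinear map; $(x_k)_{k\ge0}$ is a sequence in $\mathbb{R}^n$ with steps $s_k = x_{k+1}-x_k \ne 0$; $(W_k)_{k\ge0}$ are nonsingular $n\times n$ matrices; $\widetilde{\mathcal{C}}_k = \int_0^1 D^pf(x_k+ts_k)\,dt$; $\mathcal{C}_0\in\mathbb{R}^{\otimes^p n}_{\mathrm{sym}}$ is arbitrary and $\mathcal{C}_{k+1}$ is the unique minimizer of $\|(\mathcal{C}-\mathcal{C}_k)[W_k]^p\|_F$ over $\mathcal{C}\in\mathbb{R}^{\otimes^p n}_{\mathrm{sym}}$ subject to $\mathcal{C}[s_k]=\widetilde{\mathcal{C}}_k[s_k]$. Notation: a $p$-tensor is a multilinear map $(\mathbb{R}^n)^p\to\mathbb{R}$; $\mathcal{T}[s]$ fixes the first argument to $s$ (a $(p-1)$-tensor); $(\mathcal{T}[M]^p)[s_1,\dots,s_p]=\mathcal{T}[Ms_1,\dots,Ms_p]$;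 symmetric means invariant under permutation of arguments; $\|\cdot\|_F$ is the Frobenius norm of the array of entries; $\|\mathcal{T}\|_2=\max_{\|u_i\|_2=1}|\mathcal{T}[u_1,\dots,u_p]|$; on matrices $\|\cdot\|_2$ is the spectral norm. *)

theory Defs
  imports "HOL-Analysis.Analysis"
begin

text \<open>Tensors over R^n (n = CARD('n)) are represented as functions from index lists to reals;
  a p-tensor is one whose entries vanish off lists of length p. Entry at [i1,...,ip] is
  T[e_i1,...,e_ip].\<close>

type_synonym 'n tensor = "'n list \<Rightarrow> real"

definition is_tensor :: "nat \<Rightarrow> 'n tensor \<Rightarrow> bool" where
  "is_tensor p T \<longleftrightarrow> (\<forall>is. length is \<noteq> p \<longrightarrow> T is = 0)"

definition sym_tensor :: "nat \<Rightarrow> 'n tensor \<Rightarrow> bool" where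
  "sym_tensor p T \<longleftrightarrow> is_tensor p T \<and>
     (\<forall>is js. length is = p \<longrightarrow> mset is = mset js \<longrightarrow> T is = T js)"

definition tapply :: "'n::finite tensor \<Rightarrow> real^'n \<Rightarrow> 'n tensor" where
  "tapply T s = (\<lambda>is. \<Sum>j\<in>UNIV. s $ j * T (j # is))"

text \<open>(T[M]^p)[s1,...,sp] = T[M s1,...,M sp].\<close>
definition ttransform :: "nat \<Rightarrow> 'n::finite tensor \<Rightarrow> real^'n^'n \<Rightarrow> 'n tensor" where
  "ttransform p T M = (\<lambda>is. if length is = p then
      (\<Sum>js\<in>{js. length js = p}. T js * (\<Prod>k<p. M $ (js ! k) $ (is ! k))) else 0)"

definition frob :: "nat \<Rightarrow> 'n::finite tensor \<Rightarrow> real" where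
  "frob q T = sqrt (\<Sum>is\<in>{is. length is = q}. (T is)\<^sup>2)"

definition teval :: "nat \<Rightarrow> 'n::finite tensor \<Rightarrow> (nat \<Rightarrow> real^'n) \<Rightarrow> real" where
  "teval p T u = (\<Sum>js\<in>{js. length js = p}. T js * (\<Prod>k<p. u k $ (js ! k)))"

definition tnorm2 :: "nat \<Rightarrow> 'n::finite tensor \<Rightarrow> real" where
  "tnorm2 p T = (SUP u\<in>{u. \<forall>k<p. norm (u k) = 1}. \<bar>teval p T u\<bar>)"

fun pd :: "'n::finite list \<Rightarrow> (real^'n \<Rightarrow> real) \<Rightarrow> real^'n \<Rightarrow> real" where
  "pd [] f = f"
| "pd (i # is) f = (\<lambda>x. frechet_derivative (pd is f) (at x) (axis i 1))"

definition Cp :: "nat \<Rightarrow> (real^'n::finite \<Rightarrow> real) \<Rightarrow> bool" where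
  "Cp p f \<longleftrightarrow> (\<forall>is. length is < p \<longrightarrow> (\<forall>x. pd is f differentiable (at x)))
             \<and> (\<forall>is. length is \<le> p \<longrightarrow> continuous_on UNIV (pd is f))"

definition Dp :: "nat \<Rightarrow> (real^'n::finite \<Rightarrow> real) \<Rightarrow> real^'n \<Rightarrow> 'n tensor" where
  "Dp p f x = (\<lambda>is. if length is = p then pd is f x else 0)"

definition Cavg :: "nat \<Rightarrow> (real^'n::finite \<Rightarrow> real) \<Rightarrow> real^'n \<Rightarrow> real^'n \<Rightarrow> 'n tensor" where
  "Cavg p f x s = (\<lambda>is. integral {0..1} (\<lambda>t. Dp p f (x + t *\<^sub>R s) is))"

end

(*
  The update C (k+1) is the orthogonal projection, in the inner product of the weighted
  Frobenius norm T |-> ||T[W k]^p||_F, of C k onto the affine space of symmetric tensors C'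
  with C'[s k] = Y k [s k], where Y k is the averaged derivative. By Schwarz's theorem Y k is
  symmetric, so it lies in that space, and Pythagoras gives
    ||C k - Y k||^2 = ||C k - C (k+1)||^2 + ||C (k+1) - Y k||^2.
  Lipschitz continuity of D^p f makes ||Y k - D^p f xs|| summable, and summability of
  ||W k - Ws|| makes the W k-norms summably close to the Ws-norm. Hence
  a k = ||C k - D^p f xs||_Ws satisfies a bounded deterioration inequality, so it converges,
  and then Pythagoras forces ||C k - C (k+1)|| -> 0. The claim follows from
  (C k - D^p f xs)[s k] = (C k - C (k+1))[s k] + (Y k - D^p f xs)[s k].
*)

theory Submission
  imports Defs
begin

section \<open>Frobenius norm of tensors\<close>

lemma finite_tensor_indices: "finite {is::'n::finite list. length is = q}"
  using finite_lists_length_eq[of "UNIV::'n set" q] by simp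

lemma frob_eq_L2_set: "frob q T = L2_set T {is. length is = q}"
  unfolding frob_def L2_set_def by simp

lemma frob_nonneg: "0 \<le> frob q T"
  by (simp add: frob_def sum_nonneg)

lemma power2_frob: "(frob q T)\<^sup>2 = (\<Sum>is\<in>{is::'n::finite list. length is = q}. (T is)\<^sup>2)"
  unfolding frob_def by (simp add: sum_nonneg)

lemma frob_cong: "(\<And>is. length is = q \<Longrightarrow> T is = S is) \<Longrightarrow> frob q T = frob q S"
  unfolding frob_def by (auto intro!: arg_cong[where f=sqrt] sum.cong)

lemma frob_abs: "frob q (\<lambda>is. \<bar>T is\<bar>) = frob q T"
  by (simp add: frob_def)

lemma frob_triangle: "frob q (\<lambda>is. T is + S is) \<le> frob q T + frob q S"
  unfolding frob_eq_L2_set by (rule L2_set_triangle_ineq)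

lemma frob_minus_commute: "frob q (T - S) = frob q (S - T)"
  unfolding frob_def by (simp add: power2_commute)

lemma frob_diff_le: "\<bar>frob q T - frob q S\<bar> \<le> frob q (T - S)"
  using frob_triangle[of q "T - S" S] frob_triangle[of q "S - T" T] frob_minus_commute[of q T S]
  by (simp add: fun_diff_def)

lemma frob_le_const:
  assumes "\<And>is. length is = q \<Longrightarrow> \<bar>T is\<bar> \<le> B" "0 \<le> B"
  shows "frob q (T::'n::finite tensor) \<le> sqrt (card {is::'n list. length is = q}) * B"
proof -
  have "frob q T = L2_set (\<lambda>is. \<bar>T is\<bar>) {is. length is = q}"
    by (simp add: frob_eq_L2_set[symmetric] frob_abs)
  also have "\<dots> \<le> L2_set (\<lambda>is. B) {is::'n list. length is = q}"
    by (rule L2_set_mono) (auto simp: assms)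
  finally show ?thesis
    using assms(2) by (simp add: L2_set_constant)
qed

lemma sum_abs_le_frob:
  fixes T :: "'n::finite tensor"
  shows "(\<Sum>is\<in>{is. length is = q}. \<bar>T is\<bar>) \<le> sqrt (card {is::'n list. length is = q}) * frob q T"
  using L2_set_mult_ineq[of T "\<lambda>_. 1::real" "{is::'n list. length is = q}"]
  by (simp add: frob_eq_L2_set L2_set_constant mult.commute)

lemma frob_kernel_le:
  fixes T X :: "'n::finite tensor" and \<kappa> :: real
  assumes X: "\<And>is. length is = p \<Longrightarrow> X is = (\<Sum>js\<in>{js. length js = p}. T js * K is js)"
    and K: "\<And>is js. length is = p \<Longrightarrow> length js = p \<Longrightarrow> \<bar>K is js\<bar> \<le> \<kappa>"
    and "0 \<le> \<kappa>"
  shows "frob p X \<le> card {is::'n list. length is = p} * \<kappa> * frob p T"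
proof -
  let ?N = "card {is::'n list. length is = p}"
  have "\<bar>X is\<bar> \<le> \<kappa> * (sqrt ?N * frob p T)" if "length is = p" for "is"
  proof -
    have "\<bar>X is\<bar> \<le> (\<Sum>js\<in>{js. length js = p}. \<bar>T js\<bar> * \<kappa>)"
      unfolding X[OF that] using K[OF that]
      by (intro order_trans[OF sum_abs] sum_mono) (auto simp: abs_mult intro: mult_left_mono)
    also have "\<dots> = \<kappa> * (\<Sum>js\<in>{js. length js = p}. \<bar>T js\<bar>)"
      by (simp add: sum_distrib_left mult.commute)
    also have "\<dots> \<le> \<kappa> * (sqrt ?N * frob p T)"
      by (rule mult_left_mono[OF sum_abs_le_frob \<open>0 \<le> \<kappa>\<close>])
    finally show ?thesis .
  qed
  then have "frob p X \<le> sqrt ?N * (\<kappa> * (sqrt ?N * frob p T))"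
    by (intro frob_le_const) (auto simp: frob_nonneg \<open>0 \<le> \<kappa>\<close>)
  then show ?thesis
    by (simp add: algebra_simps)
qed

lemma sum_lists_length_Suc:
  "(\<Sum>is\<in>{is::'n::finite list. length is = Suc q}. h is) = (\<Sum>j\<in>UNIV. \<Sum>is\<in>{is. length is = q}. h (j # is))"
proof -
  have "{is::'n list. length is = Suc q} = (\<lambda>(j, is). j # is) ` (UNIV \<times> {is. length is = q})"
    by (auto simp: length_Suc_conv image_iff)
  moreover have "inj_on (\<lambda>(j, is). j # is) (UNIV \<times> {is::'n list. length is = q})"
    by (auto simp: inj_on_def)
  ultimately show ?thesis
    by (simp add: sum.reindex sum.cartesian_product split_def)
qed

lemma sum_lists_length_prod:
  fixes g :: "nat \<Rightarrow> 'n::finite \<Rightarrow> real"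
  shows "(\<Sum>is\<in>{is::'n list. length is = p}. \<Prod>k<p. g k (is ! k)) = (\<Prod>k<p. \<Sum>j\<in>UNIV. g k j)"
proof (induction p arbitrary: g)
  case 0
  then show ?case by simp
next
  case (Suc p)
  have "(\<Sum>is\<in>{is::'n list. length is = Suc p}. \<Prod>k<Suc p. g k (is ! k))
      = (\<Sum>j\<in>UNIV. \<Sum>is\<in>{is::'n list. length is = p}. g 0 j * (\<Prod>k<p. g (Suc k) (is ! k)))"
    by (simp only: sum_lists_length_Suc prod.lessThan_Suc_shift) simp
  also have "\<dots> = (\<Sum>j\<in>UNIV. g 0 j) * (\<Prod>k<p. \<Sum>j\<in>UNIV. g (Suc k) j)"
    using Suc.IH[of "\<lambda>k. g (Suc k)"] by (simp flip: sum_distrib_left sum_distrib_right)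
  also have "\<dots> = (\<Prod>k<Suc p. \<Sum>j\<in>UNIV. g k j)"
    by (simp only: prod.lessThan_Suc_shift)
  finally show ?case .
qed

lemma prod_nth_eq_indicator:
  assumes "length is = p" "length js = p"
  shows "(\<Prod>k<p. if js ! k = is ! k then 1 else 0::real) = (if js = is then 1 else 0)"
proof (cases "js = is")
  case False
  then obtain k where "k < p" "js ! k \<noteq> is ! k"
    using assms nth_equalityI by metis
  then have "(\<Prod>k<p. if js ! k = is ! k then 1 else 0::real) = 0"
    by (intro prod_zero) auto
  then show ?thesis
    using False by simp
qed simp

lemma frob_tapply_le: "frob q (tapply T s) \<le> norm s * frob (Suc q) (T::'n::finite tensor)"
proof -
  have "(tapply T s is)\<^sup>2 \<le> (norm s)\<^sup>2 * (\<Sum>j\<in>UNIV. (T (j # is))\<^sup>2)" for "is"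
    using Cauchy_Schwarz_ineq_sum[of "\<lambda>j. s $ j" "\<lambda>j. T (j # is)" UNIV]
    by (simp add: tapply_def norm_vec_def L2_set_def sum_nonneg)
  then have "(\<Sum>is\<in>{is::'n list. length is = q}. (tapply T s is)\<^sup>2)
      \<le> (\<Sum>is\<in>{is::'n list. length is = q}. (norm s)\<^sup>2 * (\<Sum>j\<in>UNIV. (T (j # is))\<^sup>2))"
    by (rule sum_mono)
  also have "\<dots> = (norm s)\<^sup>2 * (\<Sum>is\<in>{is::'n list. length is = Suc q}. (T is)\<^sup>2)"
    by (simp add: sum_lists_length_Suc sum_distrib_left sum.swap[of _ UNIV])
  finally show ?thesis
    unfolding frob_def by (metis real_sqrt_le_mono real_sqrt_mult real_sqrt_abs abs_norm_cancel)
qed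

lemma abs_prod_diff_le:
  fixes a b :: "nat \<Rightarrow> real"
  assumes a: "\<And>k. k < p \<Longrightarrow> \<bar>a k\<bar> \<le> \<mu>" and b: "\<And>k. k < p \<Longrightarrow> \<bar>b k\<bar> \<le> \<mu>"
    and ab: "\<And>k. k < p \<Longrightarrow> \<bar>a k - b k\<bar> \<le> \<epsilon>" and "1 \<le> \<mu>"
  shows "\<bar>(\<Prod>k<p. a k) - (\<Prod>k<p. b k)\<bar> \<le> p * \<mu> ^ p * \<epsilon>"
proof -
  have "\<bar>(\<Prod>k<p. a k) - (\<Prod>k<p. b k)\<bar> = \<mu> ^ p * \<bar>(\<Prod>k<p. a k / \<mu>) - (\<Prod>k<p. b k / \<mu>)\<bar>"
    using \<open>1 \<le> \<mu>\<close> by (simp add: prod_dividef abs_mult flip: diff_divide_distrib)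
  also have "\<dots> \<le> \<mu> ^ p * (\<Sum>k<p. \<bar>a k - b k\<bar> / \<mu>)"
    using norm_prod_diff[of "{..<p}" "\<lambda>k. a k / \<mu>" "\<lambda>k. b k / \<mu>"] a b \<open>1 \<le> \<mu>\<close>
    by (intro mult_left_mono) (auto simp flip: diff_divide_distrib)
  also have "\<dots> \<le> \<mu> ^ p * (\<Sum>k<p. \<bar>a k - b k\<bar>)"
    using \<open>1 \<le> \<mu>\<close> by (intro mult_left_mono sum_mono) (auto simp: divide_le_eq mult_le_cancel_left1)
  also have "\<dots> \<le> \<mu> ^ p * (p * \<epsilon>)"
    using ab sum_mono[of "{..<p}" "\<lambda>k. \<bar>a k - b k\<bar>" "\<lambda>_. \<epsilon>"] \<open>1 \<le> \<mu>\<close>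
    by (intro mult_left_mono) auto
  finally show ?thesis
    by (simp add: algebra_simps)
qed

section \<open>Change of variables and weighted Frobenius norms\<close>

lemma abs_matrix_entry_le_norm: "\<bar>A $ i $ j\<bar> \<le> norm (A :: real^'n::finite^'m::finite)"
  using component_le_norm_cart[of "A $ i" j] Finite_Cartesian_Product.norm_nth_le[of A i] by linarith

lemma ttransform_mat_1:
  assumes "length is = p"
  shows "ttransform p T (mat 1) is = T is"
proof -
  have "ttransform p T (mat 1) is = (\<Sum>js\<in>{js. length js = p}. T js * (if js = is then 1 else 0))"
    using assms by (auto simp: ttransform_def mat_def prod_nth_eq_indicator intro!: sum.cong)
  then show ?thesis
    using assms by (simp add: if_distrib finite_tensor_indices cong: if_cong)
qed

lemma ttransform_ttransform:
  fixes A B :: "real^'n::finite^'n"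
  shows "ttransform p (ttransform p T A) B = ttransform p T (A ** B)"
proof
  fix "is" :: "'n list"
  let ?L = "{js::'n list. length js = p}"
  show "ttransform p (ttransform p T A) B is = ttransform p T (A ** B) is"
  proof (cases "length is = p")
    case True
    have "ttransform p (ttransform p T A) B is
        = (\<Sum>ls\<in>?L. \<Sum>js\<in>?L. T js * ((\<Prod>k<p. A $ (js ! k) $ (ls ! k)) * (\<Prod>k<p. B $ (ls ! k) $ (is ! k))))"
      using True by (simp add: ttransform_def sum_distrib_right mult.assoc)
    also have "\<dots> = (\<Sum>js\<in>?L. T js * (\<Sum>ls\<in>?L. \<Prod>k<p. A $ (js ! k) $ (ls ! k) * B $ (ls ! k) $ (is ! k)))"
      by (subst sum.swap) (simp add: sum_distrib_left prod.distrib)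
    also have "\<dots> = ttransform p T (A ** B) is"
    proof -
      have "(\<Sum>ls\<in>?L. \<Prod>k<p. A $ (js ! k) $ (ls ! k) * B $ (ls ! k) $ (is ! k))
          = (\<Prod>k<p. (A ** B) $ (js ! k) $ (is ! k))" for js :: "'n list"
        using sum_lists_length_prod[where p=p and g="\<lambda>k l. A $ (js ! k) $ l * B $ l $ (is ! k)"]
        by (simp add: matrix_matrix_mult_def)
      then show ?thesis
        using True by (simp add: ttransform_def)
    qed
    finally show ?thesis .
  qed (simp add: ttransform_def)
qed

lemma tapply_diff: "tapply (T - S) s = tapply T s - tapply S s"
  by (auto simp: tapply_def fun_diff_def sum_subtractf algebra_simps)

lemma ttransform_diff: "ttransform p (T - S) A = ttransform p T A - ttransform p S A"
  by (auto simp: ttransform_def fun_diff_def sum_subtractf algebra_simps)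

lemma tapply_lincomb: "tapply (\<lambda>is. a * T is + b * S is) s = (\<lambda>is. a * tapply T s is + b * tapply S s is)"
  by (auto simp: tapply_def sum.distrib sum_distrib_left algebra_simps)

lemma ttransform_lincomb:
  "ttransform p (\<lambda>is. a * T is + b * S is) A = (\<lambda>is. a * ttransform p T A is + b * ttransform p S A is)"
  by (auto simp: ttransform_def sum.distrib sum_distrib_left algebra_simps)

lemma sym_tensor_lincomb: "sym_tensor p T \<Longrightarrow> sym_tensor p S \<Longrightarrow> sym_tensor p (\<lambda>is. a * T is + b * S is)"
  unfolding sym_tensor_def is_tensor_def by auto

definition wfrob :: "nat \<Rightarrow> real^'n^'n \<Rightarrow> 'n::finite tensor \<Rightarrow> real" where
  "wfrob p A T = frob p (ttransform p T A)"

lemma wfrob_nonneg: "0 \<le> wfrob p A T"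
  by (simp add: wfrob_def frob_nonneg)

lemma wfrob_triangle: "wfrob p A (T - S) \<le> wfrob p A (T - R) + wfrob p A (R - S)"
  using frob_triangle[of p "ttransform p T A - ttransform p R A" "ttransform p R A - ttransform p S A"]
  unfolding wfrob_def ttransform_diff by (simp add: fun_diff_def)

lemma wfrob_minus_commute: "wfrob p A (T - S) = wfrob p A (S - T)"
  by (simp add: wfrob_def ttransform_diff frob_minus_commute)

lemma wfrob_le:
  fixes A :: "real^'n::finite^'n" and \<mu> :: real
  assumes "\<And>i j. \<bar>A $ i $ j\<bar> \<le> \<mu>" "1 \<le> \<mu>"
  shows "wfrob p A T \<le> card {is::'n list. length is = p} * \<mu> ^ p * frob p T"
  unfolding wfrob_def
proof (rule frob_kernel_le[where K="\<lambda>is js. \<Prod>k<p. A $ (js ! k) $ (is ! k)"])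
  show "\<bar>\<Prod>k<p. A $ (js ! k) $ (is ! k)\<bar> \<le> \<mu> ^ p" for "is" js :: "'n list"
    using prod_mono[of "{..<p}" "\<lambda>k. \<bar>A $ (js ! k) $ (is ! k)\<bar>" "\<lambda>_. \<mu>"] assms
    by (simp add: abs_prod)
  show "ttransform p T A is = (\<Sum>js\<in>{js. length js = p}. T js * (\<Prod>k<p. A $ (js ! k) $ (is ! k)))"
    if "length is = p" for "is"
    using that by (simp add: ttransform_def)
qed (use assms in auto)

lemma wfrob_le_frob: "\<exists>c\<ge>0. \<forall>T. wfrob p (A::real^'n::finite^'n) T \<le> c * frob p T"
proof (intro exI conjI allI)
  show "wfrob p A T \<le> card {is::'n list. length is = p} * (1 + norm A) ^ p * frob p T" for T
    using abs_matrix_entry_le_norm[of A] by (intro wfrob_le) (auto intro: add_increasing)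
qed simp

lemma frob_le_wfrob:
  assumes "invertible (A::real^'n::finite^'n)"
  shows "\<exists>K\<ge>0. \<forall>T. frob p T \<le> K * wfrob p A T"
proof -
  obtain B :: "real^'n^'n" where B: "A ** B = mat 1"
    using assms invertible_right_inverse by blast
  obtain K where "0 \<le> K" and K: "\<And>T. wfrob p B T \<le> K * frob p T"
    using wfrob_le_frob by blast
  have "frob p T = wfrob p B (ttransform p T A)" for T
    unfolding wfrob_def ttransform_ttransform B by (rule frob_cong) (simp add: ttransform_mat_1)
  then show ?thesis
    using K \<open>0 \<le> K\<close> by (metis wfrob_def)
qed

lemma wfrob_diff_le:
  fixes A B :: "real^'n::finite^'n" and \<mu> \<epsilon> :: real
  assumes "\<And>i j. \<bar>A $ i $ j\<bar> \<le> \<mu>" "\<And>i j. \<bar>B $ i $ j\<bar> \<le> \<mu>" "1 \<le> \<mu>"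
    and "\<And>i j. \<bar>A $ i $ j - B $ i $ j\<bar> \<le> \<epsilon>"
  shows "\<bar>wfrob p A T - wfrob p B T\<bar> \<le> card {is::'n list. length is = p} * (p * \<mu> ^ p * \<epsilon>) * frob p T"
proof -
  have "0 \<le> \<epsilon>"
    using assms(4) by (meson abs_ge_zero order_trans)
  have "\<bar>wfrob p A T - wfrob p B T\<bar> \<le> frob p (ttransform p T A - ttransform p T B)"
    unfolding wfrob_def by (rule frob_diff_le)
  also have "\<dots> \<le> card {is::'n list. length is = p} * (p * \<mu> ^ p * \<epsilon>) * frob p T"
  proof (rule frob_kernel_le[where
        K="\<lambda>is js. (\<Prod>k<p. A $ (js ! k) $ (is ! k)) - (\<Prod>k<p. B $ (js ! k) $ (is ! k))"])
    show "(ttransform p T A - ttransform p T B) is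
        = (\<Sum>js\<in>{js. length js = p}. T js * ((\<Prod>k<p. A $ (js ! k) $ (is ! k)) - (\<Prod>k<p. B $ (js ! k) $ (is ! k))))"
      if "length is = p" for "is"
      using that by (simp add: ttransform_def sum_subtractf algebra_simps)
    show "\<bar>(\<Prod>k<p. A $ (js ! k) $ (is ! k)) - (\<Prod>k<p. B $ (js ! k) $ (is ! k))\<bar> \<le> p * \<mu> ^ p * \<epsilon>"
      for "is" js :: "'n list"
      using assms by (intro abs_prod_diff_le) auto
  qed (use assms \<open>0 \<le> \<epsilon>\<close> in simp)
  finally show ?thesis .
qed

lemma wfrob_perturbation_summable:
  fixes W :: "nat \<Rightarrow> real^'n::finite^'n"
  assumes summable: "summable (\<lambda>k. onorm ((*v) (W k - Ws)))" and "invertible Ws"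
  obtains \<beta> where "summable \<beta>" "\<And>k. 0 \<le> \<beta> k"
    "\<And>k T. \<bar>wfrob p (W k) T - wfrob p Ws T\<bar> \<le> \<beta> k * wfrob p Ws T"
proof -
  define \<epsilon> where "\<epsilon> k = onorm ((*v) (W k - Ws))" for k
  have \<epsilon>_nonneg: "0 \<le> \<epsilon> k" for k
    unfolding \<epsilon>_def by (intro onorm_pos_le matrix_vector_mul_bounded_linear)
  obtain E where E: "\<And>k. \<epsilon> k \<le> E"
  proof -
    obtain E where "\<And>k. norm (\<epsilon> k) \<le> E"
      using summable_imp_Bseq[OF summable] by (auto simp: \<epsilon>_def Bseq_def)
    then show ?thesis
      using that[of E] by (metis abs_le_D1 real_norm_def)
  qed
  define \<mu> where "\<mu> = 1 + norm Ws + E"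
  have W_diff: "\<bar>W k $ i $ j - Ws $ i $ j\<bar> \<le> \<epsilon> k" for k i j
    using matrix_component_le_onorm[of "W k - Ws" i j] by (simp add: \<epsilon>_def)
  have Ws_entry: "\<bar>Ws $ i $ j\<bar> \<le> \<mu>" for i j
    using abs_matrix_entry_le_norm[of Ws i j] E[of 0] \<epsilon>_nonneg[of 0] by (simp add: \<mu>_def)
  have W_entry: "\<bar>W k $ i $ j\<bar> \<le> \<mu>" for k i j
    using abs_matrix_entry_le_norm[of Ws i j] W_diff[of k i j] E[of k] by (simp add: \<mu>_def)
  have "1 \<le> \<mu>"
    using E[of 0] \<epsilon>_nonneg[of 0] by (simp add: \<mu>_def)
  obtain K where "0 \<le> K" and K: "\<And>T. frob p T \<le> K * wfrob p Ws T"
    using frob_le_wfrob[OF \<open>invertible Ws\<close>] by blast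
  define c where "c = card {is::'n list. length is = p} * (p * \<mu> ^ p) * K"
  show ?thesis
  proof (rule that[of "\<lambda>k. c * \<epsilon> k"])
    show "summable (\<lambda>k. c * \<epsilon> k)"
      using summable unfolding \<epsilon>_def by (rule summable_mult)
    show "0 \<le> c * \<epsilon> k" for k
      using \<open>0 \<le> K\<close> \<open>1 \<le> \<mu>\<close> \<epsilon>_nonneg by (simp add: c_def)
    show "\<bar>wfrob p (W k) T - wfrob p Ws T\<bar> \<le> c * \<epsilon> k * wfrob p Ws T" for k T
    proof -
      have "\<bar>wfrob p (W k) T - wfrob p Ws T\<bar> \<le> card {is::'n list. length is = p} * (p * \<mu> ^ p * \<epsilon> k) * frob p T"
        by (rule wfrob_diff_le[OF W_entry Ws_entry \<open>1 \<le> \<mu>\<close> W_diff])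
      also have "\<dots> \<le> card {is::'n list. length is = p} * (p * \<mu> ^ p * \<epsilon> k) * (K * wfrob p Ws T)"
        using K \<open>1 \<le> \<mu>\<close> \<epsilon>_nonneg[of k] by (intro mult_left_mono) auto
      finally show ?thesis
        by (simp add: c_def algebra_simps)
    qed
  qed
qed

section \<open>Higher derivatives\<close>

lemma teval_axis:
  assumes "length is = p"
  shows "teval p T (\<lambda>k. axis (is ! k) 1) = T is"
proof -
  have "teval p T (\<lambda>k. axis (is ! k) 1) = (\<Sum>js\<in>{js. length js = p}. T js * (if js = is then 1 else 0))"
    using assms by (auto simp: teval_def axis_def prod_nth_eq_indicator intro!: sum.cong)
  then show ?thesis
    using assms by (simp add: if_distrib finite_tensor_indices cong: if_cong)
qed

lemma abs_entry_le_tnorm2: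
  fixes T :: "'n::finite tensor"
  assumes "length is = p"
  shows "\<bar>T is\<bar> \<le> tnorm2 p T"
proof -
  let ?U = "{u::nat \<Rightarrow> real^'n. \<forall>k<p. norm (u k) = 1}"
  have "\<bar>teval p T u\<bar> \<le> (\<Sum>js\<in>{js. length js = p}. \<bar>T js\<bar>)" if "u \<in> ?U" for u
  proof -
    have "\<bar>u k $ j\<bar> \<le> 1" if "k < p" for k j
      using \<open>u \<in> ?U\<close> that component_le_norm_cart[of "u k" j] by simp
    then have "\<bar>\<Prod>k<p. u k $ (js ! k)\<bar> \<le> 1" for js :: "'n list"
      using prod_mono[of "{..<p}" "\<lambda>k. \<bar>u k $ (js ! k)\<bar>" "\<lambda>_. 1"] by (simp add: abs_prod)
    then have "\<bar>T js * (\<Prod>k<p. u k $ (js ! k))\<bar> \<le> \<bar>T js\<bar>" for js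
      by (simp add: abs_mult mult_left_le)
    then show ?thesis
      unfolding teval_def by (rule order_trans[OF sum_abs sum_mono])
  qed
  then have "bdd_above ((\<lambda>u. \<bar>teval p T u\<bar>) ` ?U)"
    by (rule bdd_aboveI2)
  moreover have "(\<lambda>k. axis (is ! k) 1) \<in> ?U"
    by (simp add: norm_axis_1)
  ultimately have "\<bar>teval p T (\<lambda>k. axis (is ! k) 1)\<bar> \<le> tnorm2 p T"
    unfolding tnorm2_def by (rule cSUP_upper2) simp
  then show ?thesis
    by (simp add: teval_axis[OF assms])
qed

lemma has_real_derivative_along_line:
  fixes h :: "'a::real_normed_vector \<Rightarrow> real"
  assumes "h differentiable (at (y + t *\<^sub>R v))"
  shows "((\<lambda>t. h (y + t *\<^sub>R v)) has_real_derivative frechet_derivative h (at (y + t *\<^sub>R v)) v) (at t)"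
proof -
  let ?D = "frechet_derivative h (at (y + t *\<^sub>R v))"
  have hd: "(h has_derivative ?D) (at (y + t *\<^sub>R v))" using assms frechet_derivative_works by blast
  have ld: "((\<lambda>t. y + t *\<^sub>R v) has_derivative (\<lambda>dt. dt *\<^sub>R v)) (at t)"
    by (rule derivative_eq_intros refl | simp)+
  have "((\<lambda>t. h (y + t *\<^sub>R v)) has_derivative (\<lambda>dt. ?D (dt *\<^sub>R v))) (at t)"
    using diff_chain_at[OF ld hd] by (simp add: o_def)
  moreover have "(\<lambda>dt. ?D (dt *\<^sub>R v)) = (\<lambda>dt. ?D v * dt)"
  proof
    fix dt :: real
    have "linear ?D" by (rule linear_frechet_derivative[OF assms])
    then show "?D (dt *\<^sub>R v) = ?D v * dt" by (simp add: linear_scale)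
  qed
  ultimately show ?thesis unfolding has_field_derivative_def by simp
qed

lemma second_difference_mvt:
  fixes g :: "'a::real_normed_vector \<Rightarrow> real"
  assumes gd: "\<And>y. g differentiable (at y)"
    and gud: "\<And>y. (\<lambda>z. frechet_derivative g (at z) u) differentiable (at y)"
    and st: "0 < s" "0 < t"
  shows "\<exists>y. norm (y - x) \<le> s * norm u + t * norm v \<and>
    g (x + s *\<^sub>R u + t *\<^sub>R v) - g (x + s *\<^sub>R u) - g (x + t *\<^sub>R v) + g x
     = s * t * frechet_derivative (\<lambda>z. frechet_derivative g (at z) u) (at y) v"
proof -
  define gu where "gu = (\<lambda>z. frechet_derivative g (at z) u)"
  define \<psi> where "\<psi> = (\<lambda>\<sigma>. g ((x + t *\<^sub>R v) + \<sigma> *\<^sub>R u) - g (x + \<sigma> *\<^sub>R u))"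
  define \<psi>' where "\<psi>' = (\<lambda>\<sigma>. gu ((x + t *\<^sub>R v) + \<sigma> *\<^sub>R u) - gu (x + \<sigma> *\<^sub>R u))"
  have d1: "(\<psi> has_real_derivative \<psi>' \<sigma>) (at \<sigma>)" if "0 \<le> \<sigma>" "\<sigma> \<le> s" for \<sigma>
    unfolding \<psi>_def \<psi>'_def gu_def by (intro DERIV_diff has_real_derivative_along_line gd)
  obtain \<sigma> where \<sigma>: "0 < \<sigma>" "\<sigma> < s" "\<psi> s - \<psi> 0 = (s - 0) * \<psi>' \<sigma>"
    using MVT2[OF st(1) d1] by auto
  define ch where "ch = (\<lambda>\<tau>. gu ((x + \<sigma> *\<^sub>R u) + \<tau> *\<^sub>R v))"
  define chd where "chd = (\<lambda>\<tau>. frechet_derivative gu (at ((x + \<sigma> *\<^sub>R u) + \<tau> *\<^sub>R v)) v)"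
  have d2: "(ch has_real_derivative chd \<tau>) (at \<tau>)" if "0 \<le> \<tau>" "\<tau> \<le> t" for \<tau>
    unfolding ch_def chd_def by (intro has_real_derivative_along_line) (simp add: gu_def gud)
  obtain \<tau> where \<tau>: "0 < \<tau>" "\<tau> < t" "ch t - ch 0 = (t - 0) * chd \<tau>"
    using MVT2[OF st(2) d2] by auto
  define y where "y = (x + \<sigma> *\<^sub>R u) + \<tau> *\<^sub>R v"
  have e1: "\<psi>' \<sigma> = ch t - ch 0"
    unfolding \<psi>'_def ch_def by (simp add: algebra_simps)
  have e2: "g (x + s *\<^sub>R u + t *\<^sub>R v) - g (x + s *\<^sub>R u) - g (x + t *\<^sub>R v) + g x = \<psi> s - \<psi> 0"
    unfolding \<psi>_def by (simp add: algebra_simps)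
  show ?thesis
  proof (intro exI conjI)
    have "norm (y - x) = norm (\<sigma> *\<^sub>R u + \<tau> *\<^sub>R v)" unfolding y_def by (simp add: algebra_simps)
    also have "\<dots> \<le> norm (\<sigma> *\<^sub>R u) + norm (\<tau> *\<^sub>R v)" by (rule norm_triangle_ineq)
    also have "\<dots> = \<sigma> * norm u + \<tau> * norm v" using \<sigma> \<tau> by simp
    also have "\<dots> \<le> s * norm u + t * norm v"
      using \<sigma> \<tau> by (intro add_mono mult_right_mono) auto
    finally show "norm (y - x) \<le> s * norm u + t * norm v" .
    show "g (x + s *\<^sub>R u + t *\<^sub>R v) - g (x + s *\<^sub>R u) - g (x + t *\<^sub>R v) + g x
     = s * t * frechet_derivative (\<lambda>z. frechet_derivative g (at z) u) (at y) v"
      unfolding e2 \<sigma>(3) e1 \<tau>(3) using chd_def y_def gu_def by simp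
  qed
qed

lemma second_difference_quotient_tendsto:
  fixes g :: "'a::real_normed_vector \<Rightarrow> real"
  assumes gd: "\<And>y. g differentiable (at y)"
    and gud: "\<And>y. (\<lambda>z. frechet_derivative g (at z) u) differentiable (at y)"
    and cont: "continuous_on UNIV (\<lambda>y. frechet_derivative (\<lambda>z. frechet_derivative g (at z) u) (at y) v)"
    and h: "\<And>n. 0 < h n" "h \<longlonglongrightarrow> 0"
  shows "(\<lambda>n. (g (x + h n *\<^sub>R u + h n *\<^sub>R v) - g (x + h n *\<^sub>R u) - g (x + h n *\<^sub>R v) + g x) / (h n)\<^sup>2)
    \<longlonglongrightarrow> frechet_derivative (\<lambda>z. frechet_derivative g (at z) u) (at x) v"
proof -
  define D where "D = (\<lambda>y. frechet_derivative (\<lambda>z. frechet_derivative g (at z) u) (at y) v)"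
  have "\<forall>n. \<exists>y. norm (y - x) \<le> h n * norm u + h n * norm v \<and>
    g (x + h n *\<^sub>R u + h n *\<^sub>R v) - g (x + h n *\<^sub>R u) - g (x + h n *\<^sub>R v) + g x = h n * h n * D y"
    unfolding D_def using second_difference_mvt[OF gd gud h(1) h(1)] by blast
  then obtain y where y: "\<And>n. norm (y n - x) \<le> h n * norm u + h n * norm v \<and>
    g (x + h n *\<^sub>R u + h n *\<^sub>R v) - g (x + h n *\<^sub>R u) - g (x + h n *\<^sub>R v) + g x = h n * h n * D (y n)"
    by (metis choice)
  have "(\<lambda>n. y n - x) \<longlonglongrightarrow> 0"
    using y by (intro Lim_null_comparison[OF _ tendsto_mult_left_zero[OF h(2), of "norm u + norm v"]])
      (simp add: distrib_left)
  then have "y \<longlonglongrightarrow> x"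
    by (simp add: Lim_null[symmetric])
  moreover have "isCont D x"
    using cont by (simp add: D_def continuous_on_eq_continuous_at)
  ultimately have "(\<lambda>n. D (y n)) \<longlonglongrightarrow> D x"
    by (simp add: isCont_tendsto_compose)
  moreover have "h n * h n * D (y n) / (h n)\<^sup>2 = D (y n)" for n
    using h(1)[of n] by (simp add: power2_eq_square)
  ultimately show ?thesis
    using y by (simp add: D_def)
qed

lemma frechet_derivative_commute:
  fixes g :: "'a::real_normed_vector \<Rightarrow> real"
  assumes "\<And>y. g differentiable (at y)"
    and "\<And>y. (\<lambda>z. frechet_derivative g (at z) u) differentiable (at y)"
    and "\<And>y. (\<lambda>z. frechet_derivative g (at z) v) differentiable (at y)"
    and "continuous_on UNIV (\<lambda>y. frechet_derivative (\<lambda>z. frechet_derivative g (at z) u) (at y) v)"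
    and "continuous_on UNIV (\<lambda>y. frechet_derivative (\<lambda>z. frechet_derivative g (at z) v) (at y) u)"
  shows "frechet_derivative (\<lambda>z. frechet_derivative g (at z) u) (at x) v
       = frechet_derivative (\<lambda>z. frechet_derivative g (at z) v) (at x) u"
proof -
  define h where "h n = inverse (real (Suc n))" for n
  have h: "\<And>n. 0 < h n" "h \<longlonglongrightarrow> 0"
    unfolding h_def using LIMSEQ_inverse_real_of_nat by auto
  have symmetric: "g (x + h n *\<^sub>R v + h n *\<^sub>R u) - g (x + h n *\<^sub>R v) - g (x + h n *\<^sub>R u) + g x
      = g (x + h n *\<^sub>R u + h n *\<^sub>R v) - g (x + h n *\<^sub>R u) - g (x + h n *\<^sub>R v) + g x" for n
    by (simp add: algebra_simps)
  show ?thesis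
    using second_difference_quotient_tendsto[OF assms(1,2,4) h, of x]
      second_difference_quotient_tendsto[OF assms(1,3,5) h, of x]
    unfolding symmetric by (rule LIMSEQ_unique)
qed

lemma pd_swap_head:
  assumes "Cp p f" "length rest + 2 \<le> p"
  shows "pd (a # b # rest) f = pd (b # a # rest) f"
proof
  fix x
  let ?g = "pd rest f"
  have cd: "\<And>is x. length is < p \<Longrightarrow> pd is f differentiable (at x)"
    and cc: "\<And>is. length is \<le> p \<Longrightarrow> continuous_on UNIV (pd is f)"
    using assms(1) unfolding Cp_def by auto
  have gd: "\<And>y. ?g differentiable (at y)" using cd assms(2) by simp
  have gud: "\<And>y. (\<lambda>z. frechet_derivative ?g (at z) (axis b 1)) differentiable (at y)"
    using cd[of "b # rest"] assms(2) by simp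
  have gvd: "\<And>y. (\<lambda>z. frechet_derivative ?g (at z) (axis a 1)) differentiable (at y)"
    using cd[of "a # rest"] assms(2) by simp
  have c1: "continuous_on UNIV (\<lambda>y. frechet_derivative (\<lambda>z. frechet_derivative ?g (at z) (axis b 1)) (at y) (axis a 1))"
    using cc[of "a # b # rest"] assms(2) by simp
  have c2: "continuous_on UNIV (\<lambda>y. frechet_derivative (\<lambda>z. frechet_derivative ?g (at z) (axis a 1)) (at y) (axis b 1))"
    using cc[of "b # a # rest"] assms(2) by simp
  show "pd (a # b # rest) f x = pd (b # a # rest) f x"
    using frechet_derivative_commute[OF gd gud gvd c1 c2, of x] by simp
qed

lemma pd_swap:
  assumes "Cp p f" "length (pre @ a # b # rest) \<le> p"
  shows "pd (pre @ a # b # rest) f = pd (pre @ b # a # rest) f"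
  using assms(2)
proof (induction pre)
  case Nil then show ?case using pd_swap_head[OF assms(1)] by simp
next
  case (Cons c pre)
  then have "pd (pre @ a # b # rest) f = pd (pre @ b # a # rest) f" by simp
  then show ?case by simp
qed

lemma swap_invariant_move_to_front:
  assumes swap: "\<And>pre a b rest. length (pre @ a # b # rest) = p \<Longrightarrow> F (pre @ a # b # rest) = F (pre @ b # a # rest)"
  shows "length (pre @ ys @ x # zs) = p \<Longrightarrow> F (pre @ ys @ x # zs) = F (pre @ x # ys @ zs)"
proof (induction ys arbitrary: pre)
  case Nil
  then show ?case by simp
next
  case (Cons c ys)
  have "F (pre @ (c # ys) @ x # zs) = F ((pre @ [c]) @ x # ys @ zs)"
    using Cons.IH[of "pre @ [c]"] Cons.prems by simp
  also have "\<dots> = F (pre @ x # c # ys @ zs)"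
    using swap[of pre c x "ys @ zs"] Cons.prems by simp
  finally show ?case
    by simp
qed

lemma eq_if_swap_invariant:
  assumes "\<And>pre a b rest. length (pre @ a # b # rest) = p \<Longrightarrow> F (pre @ a # b # rest) = F (pre @ b # a # rest)"
    and "mset xs = mset ys" "length xs = p"
  shows "F xs = F ys"
  using assms
proof (induction xs arbitrary: ys F p)
  case Nil
  then show ?case by simp
next
  case (Cons x xs)
  have "x \<in> set ys"
    using Cons.prems(2) by (metis list.set_intros(1) set_mset_mset)
  then obtain ys1 ys2 where ys: "ys = ys1 @ x # ys2"
    by (meson split_list)
  have "F (x # xs) = F (x # ys1 @ ys2)"
  proof (rule Cons.IH[where F="\<lambda>l. F (x # l)" and p="p - 1"])
    show "F (x # pre @ a # b # rest) = F (x # pre @ b # a # rest)"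
      if "length (pre @ a # b # rest) = p - 1" for pre a b rest
      using Cons.prems(1)[of "x # pre"] Cons.prems(3) that by auto
  qed (use Cons.prems(2,3) ys in auto)
  also have "\<dots> = F ys"
    using swap_invariant_move_to_front[where F=F and p=p, OF Cons.prems(1), of "[]"] Cons.prems(2,3) ys
    by (metis append_Nil size_mset)
  finally show ?case .
qed

lemma sym_tensor_Dp:
  assumes "Cp p f"
  shows "sym_tensor p (Dp p f y)"
  unfolding sym_tensor_def is_tensor_def
proof (intro conjI allI impI)
  fix "is" js :: "'a list"
  assume l: "length is = p" and m: "mset is = mset js"
  have "pd is f = pd js f"
    by (rule eq_if_swap_invariant[where F="\<lambda>l. pd l f", OF _ m l]) (use pd_swap[OF assms] in simp)
  moreover have "length js = p" using l m by (metis size_mset)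
  ultimately show "Dp p f y is = Dp p f y js" using l unfolding Dp_def by simp
qed (simp add: Dp_def)

lemma sym_tensor_Cavg:
  assumes "Cp p f"
  shows "sym_tensor p (Cavg p f x s)"
  unfolding sym_tensor_def is_tensor_def
proof (intro conjI allI impI)
  fix "is" :: "'a list" assume "length is \<noteq> p"
  then show "Cavg p f x s is = 0" unfolding Cavg_def Dp_def by simp
next
  fix "is" js :: "'a list"
  assume l: "length is = p" and m: "mset is = mset js"
  have "Dp p f y is = Dp p f y js" for y
    using sym_tensor_Dp[OF assms, of y] l m unfolding sym_tensor_def by blast
  then show "Cavg p f x s is = Cavg p f x s js" unfolding Cavg_def by simp
qed

lemma abs_Cavg_minus_Dp_le:
  assumes "Cp p f" and "0 \<le> L"
    and lip: "\<And>y z. tnorm2 p (Dp p f y - Dp p f z) \<le> L * norm (y - z)"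
    and "length is = p"
  shows "\<bar>Cavg p f x s is - Dp p f w is\<bar> \<le> L * (norm (x - w) + norm (x + s - w))"
proof -
  let ?h = "\<lambda>t. pd is f (x + t *\<^sub>R s)"
  have "continuous_on UNIV (pd is f)"
    using assms(1,4) by (simp add: Cp_def)
  then have cont: "continuous_on {0..1} ?h"
    by (rule continuous_on_compose2) (auto intro!: continuous_intros)
  then have eq: "Cavg p f x s is - Dp p f w is = integral {0..1} (\<lambda>t. ?h t - pd is f w)"
    using assms(4) by (simp add: Cavg_def Dp_def integral_diff integrable_continuous_real)
  have "norm (integral {0..1} (\<lambda>t. ?h t - pd is f w)) \<le> L * (norm (x - w) + norm (x + s - w)) * (1 - 0)"
  proof (rule integral_bound)
    fix t :: real
    assume t: "t \<in> {0..1}"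
    have "norm (x + t *\<^sub>R s - w) = norm ((1 - t) *\<^sub>R (x - w) + t *\<^sub>R (x + s - w))"
      by (simp add: algebra_simps)
    also have "\<dots> \<le> (1 - t) * norm (x - w) + t * norm (x + s - w)"
      using t norm_triangle_ineq[of "(1 - t) *\<^sub>R (x - w)" "t *\<^sub>R (x + s - w)"] by simp
    also have "\<dots> \<le> norm (x - w) + norm (x + s - w)"
      using t by (intro add_mono) (auto intro: mult_left_le_one_le)
    finally have "norm (x + t *\<^sub>R s - w) \<le> norm (x - w) + norm (x + s - w)" .
    moreover have "\<bar>?h t - pd is f w\<bar> \<le> tnorm2 p (Dp p f (x + t *\<^sub>R s) - Dp p f w)"
      using abs_entry_le_tnorm2[OF assms(4), of "Dp p f (x + t *\<^sub>R s) - Dp p f w"] assms(4)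
      by (simp add: Dp_def)
    ultimately show "norm (?h t - pd is f w) \<le> L * (norm (x - w) + norm (x + s - w))"
      using lip[of "x + t *\<^sub>R s" w] mult_left_mono[OF _ \<open>0 \<le> L\<close>] by (simp, meson order_trans)
  qed (use cont in \<open>auto intro!: continuous_intros\<close>)
  then show ?thesis
    by (simp add: eq)
qed

lemma summable_frob_Cavg_minus_Dp:
  assumes "Cp p f" and lip: "\<And>y z. tnorm2 p (Dp p f y - Dp p f z) \<le> L * norm (y - z)"
    and summable: "summable (\<lambda>k. norm (x k - xs))"
  shows "summable (\<lambda>k. frob p (Cavg p f (x k) (x (Suc k) - x k) - Dp p f xs))"
proof (rule summable_comparison_test')
  let ?N = "card {is::'a list. length is = p}"
  have lip': "tnorm2 p (Dp p f y - Dp p f z) \<le> max L 0 * norm (y - z)" for y z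
    using lip[of y z] by (meson max.cobounded1 mult_right_mono norm_ge_zero order_trans)
  show "summable (\<lambda>k. sqrt ?N * (max L 0 * (norm (x k - xs) + norm (x (Suc k) - xs))))"
    using summable summable_Suc_iff[of "\<lambda>k. norm (x k - xs)"] by (intro summable_mult summable_add) auto
  show "norm (frob p (Cavg p f (x k) (x (Suc k) - x k) - Dp p f xs))
      \<le> sqrt ?N * (max L 0 * (norm (x k - xs) + norm (x (Suc k) - xs)))" for k
    using abs_Cavg_minus_Dp_le[OF \<open>Cp p f\<close> _ lip', of _ "x k" "x (Suc k) - x k" xs]
    by (simp add: frob_nonneg) (intro frob_le_const, auto)
qed

section \<open>The least-change secant update\<close>

lemma sum_mult_eq_0_if_minimal:
  fixes U V :: "'a \<Rightarrow> real"
  assumes "finite A" and minimal: "\<And>t. (\<Sum>i\<in>A. (U i)\<^sup>2) \<le> (\<Sum>i\<in>A. (U i + t * V i)\<^sup>2)"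
  shows "(\<Sum>i\<in>A. U i * V i) = 0"
proof -
  define c where "c = (\<Sum>i\<in>A. U i * V i)"
  define q where "q = (\<Sum>i\<in>A. (V i)\<^sup>2)"
  have "0 \<le> q"
    by (simp add: q_def sum_nonneg)
  have expand: "(\<Sum>i\<in>A. (U i + t * V i)\<^sup>2) = (\<Sum>i\<in>A. (U i)\<^sup>2) + 2 * t * c + t\<^sup>2 * q" for t
    by (simp add: c_def q_def power2_eq_square algebra_simps sum.distrib sum_distrib_left)
  define t where "t = - c / (q + 1)"
  have "0 \<le> 2 * t * c + t\<^sup>2 * q"
    using minimal[of t] expand[of t] by linarith
  moreover have "t * (q + 1) = - c"
    using \<open>0 \<le> q\<close> by (simp add: t_def)
  then have "(q + 1)\<^sup>2 * (2 * t * c + t\<^sup>2 * q) = - (c\<^sup>2 * (q + 2))"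
    by algebra
  ultimately have "c\<^sup>2 * (q + 2) \<le> 0"
    by (metis neg_0_le_iff_le zero_le_mult_iff zero_le_power2)
  with \<open>0 \<le> q\<close> show ?thesis
    by (simp add: c_def[symmetric] mult_le_0_iff)
qed

lemma secant_update_pythagoras:
  fixes C C' Y :: "'n::finite tensor"
  assumes "sym_tensor p C'" "sym_tensor p Y" and secant: "tapply C' s = tapply Y s"
    and minimal: "\<forall>C''. sym_tensor p C'' \<and> tapply C'' s = tapply Y s \<longrightarrow>
                 frob p (ttransform p (C' - C) A) \<le> frob p (ttransform p (C'' - C) A)"
  shows "(wfrob p A (C - Y))\<^sup>2 = (wfrob p A (C - C'))\<^sup>2 + (wfrob p A (C' - Y))\<^sup>2"
proof -
  define P Q R where "P = ttransform p C A" and "Q = ttransform p C' A" and "R = ttransform p Y A"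
  let ?L = "{is::'n list. length is = p}"
  \<comment> \<open>the line through \<open>C'\<close> and \<open>Y\<close> stays feasible,
    so \<open>C'\<close> minimises the distance to \<open>C\<close> along it\<close>
  have "(\<Sum>is\<in>?L. (Q is - P is)\<^sup>2) \<le> (\<Sum>is\<in>?L. (Q is - P is + t * (Q is - R is))\<^sup>2)" for t
  proof -
    define C'' where "C'' = (\<lambda>is. (1 + t) * C' is + (- t) * Y is)"
    have "sym_tensor p C''"
      unfolding C''_def by (rule sym_tensor_lincomb[OF assms(1,2)])
    moreover have "tapply C'' s = tapply Y s"
      unfolding C''_def tapply_lincomb secant by (simp add: algebra_simps)
    ultimately have "frob p (ttransform p (C' - C) A) \<le> frob p (ttransform p (C'' - C) A)"
      using minimal by blast
    moreover have "ttransform p (C'' - C) A = (\<lambda>is. Q is - P is + t * (Q is - R is))"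
      unfolding C''_def ttransform_diff ttransform_lincomb P_def Q_def R_def by (simp add: fun_diff_def algebra_simps)
    moreover have "ttransform p (C' - C) A = (\<lambda>is. Q is - P is)"
      unfolding ttransform_diff P_def Q_def by (simp add: fun_diff_def)
    ultimately show ?thesis
      by (simp add: frob_def)
  qed
  then have orthogonal: "(\<Sum>is\<in>?L. (Q is - P is) * (Q is - R is)) = 0"
    by (rule sum_mult_eq_0_if_minimal[OF finite_tensor_indices])
  have "(\<Sum>is\<in>?L. (P is - R is)\<^sup>2)
      = (\<Sum>is\<in>?L. (Q is - P is)\<^sup>2) + (\<Sum>is\<in>?L. (Q is - R is)\<^sup>2) - 2 * (\<Sum>is\<in>?L. (Q is - P is) * (Q is - R is))"
    by (simp add: power2_eq_square algebra_simps sum.distrib sum_subtractf sum_distrib_left)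
  with orthogonal show ?thesis
    unfolding wfrob_def power2_frob ttransform_diff P_def Q_def R_def by (simp add: power2_commute)
qed

section \<open>Bounded deterioration\<close>

lemma quasi_decreasing_le:
  fixes a d e :: "nat \<Rightarrow> real"
  assumes step: "\<And>k. a (Suc k) \<le> (1 + d k) * a k + e k"
    and "\<And>k. 0 \<le> a k" "\<And>k. 0 \<le> d k" "\<And>k. 0 \<le> e k"
  shows "a k \<le> exp (\<Sum>j<k. d j) * (a 0 + (\<Sum>j<k. e j))"
proof (induction k)
  case 0
  then show ?case by simp
next
  case (Suc k)
  let ?D = "\<Sum>j<k. d j" and ?E = "\<Sum>j<k. e j"
  have "(1 + d k) * a k \<le> exp (d k) * (exp ?D * (a 0 + ?E))"
    using Suc.IH assms(2,3) by (intro mult_mono exp_ge_add_one_self) auto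
  moreover have "1 \<le> exp (?D + d k)"
    using assms(3) by (simp add: sum_nonneg)
  then have "e k \<le> exp (?D + d k) * e k"
    using assms(4)[of k] by (simp add: mult_le_cancel_right1)
  ultimately have "a (Suc k) \<le> exp (d k) * (exp ?D * (a 0 + ?E)) + exp (?D + d k) * e k"
    using step[of k] by linarith
  then show ?case
    by (simp add: exp_add algebra_simps)
qed

lemma convergent_quasi_decreasing:
  fixes a d e :: "nat \<Rightarrow> real"
  assumes step: "\<And>k. a (Suc k) \<le> (1 + d k) * a k + e k"
    and a: "\<And>k. 0 \<le> a k" and d: "\<And>k. 0 \<le> d k" and e: "\<And>k. 0 \<le> e k"
    and "summable d" "summable e"
  shows "convergent a"
proof -
  define B where "B = exp (suminf d) * (a 0 + suminf e)"
  have "a k \<le> exp (\<Sum>j<k. d j) * (a 0 + (\<Sum>j<k. e j))" for k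
    using quasi_decreasing_le[where a=a and d=d and e=e, OF step a d e] .
  also have "\<dots> k \<le> B" for k
  proof -
    have "(\<Sum>j<k. d j) \<le> suminf d" "(\<Sum>j<k. e j) \<le> suminf e"
      using assms by (auto intro: sum_le_suminf)
    then show ?thesis
      unfolding B_def using a[of 0] e by (intro mult_mono add_left_mono) (auto simp: sum_nonneg)
  qed
  finally have bounded: "a k \<le> B" for k .
  define c where "c k = B * d k + e k" for k
  have "summable c"
    unfolding c_def using assms by (intro summable_add summable_mult)
  have "0 \<le> B"
    using bounded[of 0] a[of 0] by linarith
  then have "0 \<le> c k" for k
    using d e by (simp add: c_def)
  have growth: "a (Suc k) \<le> a k + c k" for k
    using step[of k] mult_left_mono[OF bounded[of k] d[of k]] unfolding c_def by argo
  have "decseq (\<lambda>k. a k - (\<Sum>j<k. c j))"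
  proof (rule decseq_SucI)
    show "a (Suc k) - (\<Sum>j<Suc k. c j) \<le> a k - (\<Sum>j<k. c j)" for k
      using growth[of k] by simp
  qed
  moreover have "- suminf c \<le> a k - (\<Sum>j<k. c j)" for k
    using sum_le_suminf[OF \<open>summable c\<close>, of "{..<k}"] \<open>\<And>k. 0 \<le> c k\<close> a[of k] by force
  ultimately obtain l where "(\<lambda>k. a k - (\<Sum>j<k. c j)) \<longlonglongrightarrow> l"
    using decseq_convergent by blast
  then have "(\<lambda>k. (a k - (\<Sum>j<k. c j)) + (\<Sum>j<k. c j)) \<longlonglongrightarrow> l + suminf c"
    using summable_LIMSEQ[OF \<open>summable c\<close>] by (rule tendsto_add)
  then show ?thesis
    by (auto simp: convergent_def)
qed

lemma convergent_eventually_quasi_decreasing: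
  fixes a d e :: "nat \<Rightarrow> real"
  assumes "\<forall>\<^sub>F k in sequentially. a (Suc k) \<le> (1 + d k) * a k + e k"
    and "\<And>k. 0 \<le> a k" "\<And>k. 0 \<le> d k" "\<And>k. 0 \<le> e k" "summable d" "summable e"
  shows "convergent a"
proof -
  obtain N where N: "\<And>k. N \<le> k \<Longrightarrow> a (Suc k) \<le> (1 + d k) * a k + e k"
    using assms(1) by (auto simp: eventually_sequentially)
  have "convergent (\<lambda>k. a (k + N))"
  proof (rule convergent_quasi_decreasing[where d="\<lambda>k. d (k + N)" and e="\<lambda>k. e (k + N)"])
    show "a (Suc k + N) \<le> (1 + d (k + N)) * a (k + N) + e (k + N)" for k
      using N[of "k + N"] by simp
    show "summable (\<lambda>k. d (k + N))" "summable (\<lambda>k. e (k + N))"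
      using assms(5,6) by (simp_all add: summable_iff_shift)
    show "0 \<le> a (k + N)" "0 \<le> d (k + N)" "0 \<le> e (k + N)" for k
      by (simp_all add: assms(2-4))
  qed
  then obtain l where "(\<lambda>k. a (k + N)) \<longlonglongrightarrow> l"
    by (auto simp: convergent_def)
  then show ?thesis
    unfolding convergent_def by (blast intro: LIMSEQ_offset)
qed

lemma convergent_if_bounded_deterioration:
  fixes a \<beta> \<rho> :: "nat \<Rightarrow> real"
  assumes "\<And>k. 0 \<le> a k" "\<And>k. 0 \<le> \<beta> k" "\<And>k. 0 \<le> \<rho> k" "summable \<beta>" "summable \<rho>"
    and "\<forall>\<^sub>F k in sequentially. (1 - \<beta> k) * (a (Suc k) - \<rho> k) \<le> (1 + \<beta> k) * (a k + \<rho> k)"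
  shows "convergent a"
proof (rule convergent_eventually_quasi_decreasing[where d="\<lambda>k. 4 * \<beta> k" and e="\<lambda>k. 4 * \<rho> k"])
  have "\<forall>\<^sub>F k in sequentially. \<beta> k < 1 / 2"
    using summable_LIMSEQ_zero[OF \<open>summable \<beta>\<close>] by (rule order_tendstoD) simp
  with assms(6) show "\<forall>\<^sub>F k in sequentially. a (Suc k) \<le> (1 + 4 * \<beta> k) * a k + 4 * \<rho> k"
  proof eventually_elim
    case (elim k)
    \<comment> \<open>for \<open>\<beta> \<le> 1/2\<close>: \<open>1 + \<beta> \<le> (1 - \<beta>) (1 + 4 \<beta>)\<close> and \<open>2 \<le> 4 (1 - \<beta>)\<close>\<close>
    have "(1 - \<beta> k) * a (Suc k) \<le> (1 - \<beta> k) * ((1 + 4 * \<beta> k) * a k + 4 * \<rho> k)"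
      using elim assms(1-3)[of k] mult_nonneg_nonneg[of "1 - 2 * \<beta> k" "2 * \<beta> k * a k + 2 * \<rho> k"]
      by (simp add: algebra_simps)
    then show ?case
      using elim by (simp add: mult_le_cancel_left_pos)
  qed
qed (use assms in \<open>auto intro: summable_mult\<close>)

lemma bounded_deterioration_tendsto_0:
  fixes a d V \<beta> \<rho> :: "nat \<Rightarrow> real"
  assumes "\<And>k. 0 \<le> a k" "\<And>k. 0 \<le> V k" "\<And>k. 0 \<le> \<beta> k" "\<And>k. 0 \<le> \<rho> k" "summable \<beta>" "summable \<rho>"
    and upper: "\<And>k. (d k)\<^sup>2 + (V k)\<^sup>2 \<le> ((1 + \<beta> k) * (a k + \<rho> k))\<^sup>2"
    and lower: "\<forall>\<^sub>F k in sequentially. (1 - \<beta> k) * (a (Suc k) - \<rho> k) \<le> V k"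
  shows "d \<longlonglongrightarrow> 0"
proof -
  define u where "u k = (1 + \<beta> k) * (a k + \<rho> k)" for k
  define v where "v k = (1 - \<beta> k) * (a (Suc k) - \<rho> k)" for k
  have V_le_u: "V k \<le> u k" for k
  proof (rule power2_le_imp_le)
    show "(V k)\<^sup>2 \<le> (u k)\<^sup>2"
      using upper[of k] zero_le_power2[of "d k"] unfolding u_def by linarith
    show "0 \<le> u k"
      using assms(1,3,4)[of k] by (simp add: u_def)
  qed
  from lower have "\<forall>\<^sub>F k in sequentially. v k \<le> u k"
    by (rule eventually_mono) (simp add: v_def order.trans[OF _ V_le_u])
  then have "convergent a"
    unfolding u_def v_def by (rule convergent_if_bounded_deterioration[OF assms(1,3-6)])
  then obtain \<alpha> where "a \<longlonglongrightarrow> \<alpha>"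
    by (auto simp: convergent_def)
  have "0 \<le> \<alpha>"
    by (intro LIMSEQ_le_const[OF \<open>a \<longlonglongrightarrow> \<alpha>\<close>]) (use assms(1) in auto)
  have \<beta>: "\<beta> \<longlonglongrightarrow> 0" and \<rho>: "\<rho> \<longlonglongrightarrow> 0"
    using assms(5,6) by (simp_all add: summable_LIMSEQ_zero)
  have "u \<longlonglongrightarrow> (1 + 0) * (\<alpha> + 0)"
    unfolding u_def by (intro tendsto_mult tendsto_add tendsto_const \<beta> \<rho> \<open>a \<longlonglongrightarrow> \<alpha>\<close>)
  moreover have "v \<longlonglongrightarrow> (1 - 0) * (\<alpha> - 0)"
    unfolding v_def by (intro tendsto_mult tendsto_diff tendsto_const \<beta> \<rho> LIMSEQ_Suc[OF \<open>a \<longlonglongrightarrow> \<alpha>\<close>])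
  ultimately have "(\<lambda>k. (u k)\<^sup>2 - (max (v k) 0)\<^sup>2) \<longlonglongrightarrow> \<alpha>\<^sup>2 - (max \<alpha> 0)\<^sup>2"
    by (intro tendsto_diff tendsto_power tendsto_max tendsto_const) simp_all
  then have gap: "(\<lambda>k. (u k)\<^sup>2 - (max (v k) 0)\<^sup>2) \<longlonglongrightarrow> 0"
    using \<open>0 \<le> \<alpha>\<close> by simp
  have "\<forall>\<^sub>F k in sequentially. (d k)\<^sup>2 \<le> (u k)\<^sup>2 - (max (v k) 0)\<^sup>2"
    using lower
  proof eventually_elim
    case (elim k)
    then have "(max (v k) 0)\<^sup>2 \<le> (V k)\<^sup>2"
      using assms(2)[of k] by (intro power_mono) (auto simp: v_def)
    then show ?case
      using upper[of k] unfolding u_def by linarith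
  qed
  then have "(\<lambda>k. (d k)\<^sup>2) \<longlonglongrightarrow> 0"
    by (intro tendsto_sandwich[OF _ _ tendsto_const gap]) auto
  then have "(\<lambda>k. sqrt ((d k)\<^sup>2)) \<longlonglongrightarrow> sqrt 0"
    by (rule tendsto_real_sqrt)
  then show ?thesis
    by (simp add: tendsto_rabs_zero_iff)
qed

lemma frob_secant_correction_tendsto_0:
  fixes C Y :: "nat \<Rightarrow> 'n::finite tensor" and W :: "nat \<Rightarrow> real^'n^'n"
  assumes pythagoras: "\<And>k. (wfrob p (W k) (C k - Y k))\<^sup>2
      = (wfrob p (W k) (C k - C (Suc k)))\<^sup>2 + (wfrob p (W k) (C (Suc k) - Y k))\<^sup>2"
    and Y_summable: "summable (\<lambda>k. frob p (Y k - D))"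
    and W_summable: "summable (\<lambda>k. onorm ((*v) (W k - Ws)))" and "invertible Ws"
  shows "(\<lambda>k. frob p (C k - C (Suc k))) \<longlonglongrightarrow> 0"
proof -
  obtain \<beta> where "summable \<beta>" and \<beta>_nonneg: "\<And>k. 0 \<le> \<beta> k"
    and \<beta>: "\<And>k T. \<bar>wfrob p (W k) T - wfrob p Ws T\<bar> \<le> \<beta> k * wfrob p Ws T"
    using wfrob_perturbation_summable[OF W_summable \<open>invertible Ws\<close>] by blast
  have W_le: "wfrob p (W k) T \<le> (1 + \<beta> k) * wfrob p Ws T"
    and W_ge: "(1 - \<beta> k) * wfrob p Ws T \<le> wfrob p (W k) T" for k T
    using \<beta>[of k T] by (simp_all add: algebra_simps abs_le_iff)
  obtain c where c: "\<And>T. wfrob p Ws T \<le> c * frob p T"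
    using wfrob_le_frob by blast
  obtain K where "0 \<le> K" and K: "\<And>T. frob p T \<le> K * wfrob p Ws T"
    using frob_le_wfrob[OF \<open>invertible Ws\<close>] by blast
  define a where "a k = wfrob p Ws (C k - D)" for k
  define \<rho> where "\<rho> k = wfrob p Ws (Y k - D)" for k
  have "norm (\<rho> k) \<le> c * frob p (Y k - D)" for k
    using c[of "Y k - D"] wfrob_nonneg[of p Ws "Y k - D"] by (simp add: \<rho>_def)
  then have "summable \<rho>"
    by (intro summable_comparison_test'[OF summable_mult[OF Y_summable, of c]])
  have "\<forall>\<^sub>F k in sequentially. \<beta> k < 1 / 2"
    using summable_LIMSEQ_zero[OF \<open>summable \<beta>\<close>] by (rule order_tendstoD) simp
  have lim: "(\<lambda>k. wfrob p (W k) (C k - C (Suc k))) \<longlonglongrightarrow> 0"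
  proof (rule bounded_deterioration_tendsto_0[where a=a and \<rho>=\<rho> and V="\<lambda>k. wfrob p (W k) (C (Suc k) - Y k)"])
    show "(wfrob p (W k) (C k - C (Suc k)))\<^sup>2 + (wfrob p (W k) (C (Suc k) - Y k))\<^sup>2
        \<le> ((1 + \<beta> k) * (a k + \<rho> k))\<^sup>2" for k
    proof -
      have "wfrob p (W k) (C k - Y k) \<le> (1 + \<beta> k) * (a k + \<rho> k)"
        using W_le[of k "C k - Y k"] wfrob_triangle[of p Ws "C k" "Y k" D] wfrob_minus_commute[of p Ws "Y k"]
          \<beta>_nonneg[of k] mult_left_mono[of _ _ "1 + \<beta> k"]
        unfolding a_def \<rho>_def by (smt (verit))
      then show ?thesis
        using pythagoras[of k] wfrob_nonneg by (metis power_mono)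
    qed
    from \<open>\<forall>\<^sub>F k in sequentially. \<beta> k < 1 / 2\<close>
    show "\<forall>\<^sub>F k in sequentially. (1 - \<beta> k) * (a (Suc k) - \<rho> k) \<le> wfrob p (W k) (C (Suc k) - Y k)"
    proof eventually_elim
      case (elim k)
      have "a (Suc k) - \<rho> k \<le> wfrob p Ws (C (Suc k) - Y k)"
        using wfrob_triangle[of p Ws "C (Suc k)" D "Y k"] unfolding a_def \<rho>_def by simp
      then have "(1 - \<beta> k) * (a (Suc k) - \<rho> k) \<le> (1 - \<beta> k) * wfrob p Ws (C (Suc k) - Y k)"
        using elim by (intro mult_left_mono) auto
      then show ?case
        using W_ge[of k "C (Suc k) - Y k"] by linarith
    qed
  qed (use \<beta>_nonneg \<open>summable \<beta>\<close> \<open>summable \<rho>\<close> in \<open>auto simp: a_def \<rho>_def wfrob_nonneg\<close>)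
  have ev: "\<forall>\<^sub>F k in sequentially. frob p (C k - C (Suc k)) \<le> 2 * K * wfrob p (W k) (C k - C (Suc k))"
    using \<open>\<forall>\<^sub>F k in sequentially. \<beta> k < 1 / 2\<close>
  proof eventually_elim
    case (elim k)
    let ?\<Delta> = "C k - C (Suc k)"
    have "1 / 2 * wfrob p Ws ?\<Delta> \<le> (1 - \<beta> k) * wfrob p Ws ?\<Delta>"
      using elim by (intro mult_right_mono wfrob_nonneg) simp
    then have "wfrob p Ws ?\<Delta> \<le> 2 * wfrob p (W k) ?\<Delta>"
      using W_ge[of k ?\<Delta>] by linarith
    then have "K * wfrob p Ws ?\<Delta> \<le> K * (2 * wfrob p (W k) ?\<Delta>)"
      using \<open>0 \<le> K\<close> by (rule mult_left_mono)
    then show ?case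
      using K[of ?\<Delta>] by simp
  qed
  have bound_lim: "(\<lambda>k. 2 * K * wfrob p (W k) (C k - C (Suc k))) \<longlonglongrightarrow> 0"
    using lim by (rule tendsto_mult_right_zero)
  show ?thesis
    by (intro tendsto_sandwich[OF _ ev tendsto_const bound_lim]) (simp add: frob_nonneg)
qed

lemma frob_tapply_secant_le:
  assumes "tapply C' s = tapply Y s" and "0 < p"
  shows "frob (p - 1) (tapply (C - D) s) \<le> norm s * (frob p (C - C') + frob p (Y - D))"
proof -
  have "tapply (C - D) s = (\<lambda>is. tapply (C - C') s is + tapply (Y - D) s is)"
    unfolding tapply_diff assms(1) by (simp add: fun_diff_def)
  then have "frob (p - 1) (tapply (C - D) s) \<le> frob (p - 1) (tapply (C - C') s) + frob (p - 1) (tapply (Y - D) s)"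
    by (simp add: frob_triangle)
  also have "\<dots> \<le> norm s * frob p (C - C') + norm s * frob p (Y - D)"
    using frob_tapply_le[of "p - 1" _ s] Suc_pred[OF \<open>0 < p\<close>] by (intro add_mono) simp_all
  finally show ?thesis
    by (simp add: distrib_left)
qed

theorem mainTheorem9:
  fixes p :: nat
    and f :: "real^'n::finite \<Rightarrow> real"
    and x :: "nat \<Rightarrow> real^'n"
    and W :: "nat \<Rightarrow> real^'n^'n"
    and C :: "nat \<Rightarrow> 'n tensor"
    and xs :: "real^'n"
    and Ws :: "real^'n^'n"
  assumes p2: "p \<ge> 2"
    and f_Cp: "Cp p f"
    and Dp_lip: "\<exists>L. \<forall>y z. tnorm2 p (Dp p f y - Dp p f z) \<le> L * norm (y - z)"
    and steps: "\<forall>k. x (Suc k) - x k \<noteq> 0"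
    and W_inv: "\<forall>k. invertible (W k)"
    and C0: "sym_tensor p (C 0)"
    and C_update: "\<forall>k. sym_tensor p (C (Suc k))
        \<and> tapply (C (Suc k)) (x (Suc k) - x k) = tapply (Cavg p f (x k) (x (Suc k) - x k)) (x (Suc k) - x k)
        \<and> (\<forall>C'. sym_tensor p C'
              \<and> tapply C' (x (Suc k) - x k) = tapply (Cavg p f (x k) (x (Suc k) - x k)) (x (Suc k) - x k)
              \<longrightarrow> frob p (ttransform p (C (Suc k) - C k) (W k)) \<le> frob p (ttransform p (C' - C k) (W k)))"
    and x_lim: "x \<longlonglongrightarrow> xs"
    and W_lim: "W \<longlonglongrightarrow> Ws"
    and Ws_inv: "invertible Ws"
    and x_sum: "summable (\<lambda>k. norm (x k - xs))"
    and W_sum: "summable (\<lambda>k. onorm (\<lambda>v. (W k - Ws) *v v))"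
  shows "(\<lambda>k. frob (p - 1) (tapply (C k - Dp p f xs) (x (Suc k) - x k)) / norm (x (Suc k) - x k))
           \<longlonglongrightarrow> 0"
proof -
  \<comment> \<open>\<open>x_lim\<close> and \<open>W_lim\<close> follow from the summability hypotheses\<close>
  define s where "s k = x (Suc k) - x k" for k
  define Y where "Y k = Cavg p f (x k) (s k)" for k
  obtain L where lip: "\<And>y z. tnorm2 p (Dp p f y - Dp p f z) \<le> L * norm (y - z)"
    using Dp_lip by blast
  have secant: "tapply (C (Suc k)) (s k) = tapply (Y k) (s k)" for k
    using C_update by (simp add: s_def Y_def)
  have "(wfrob p (W k) (C k - Y k))\<^sup>2
      = (wfrob p (W k) (C k - C (Suc k)))\<^sup>2 + (wfrob p (W k) (C (Suc k) - Y k))\<^sup>2" for k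
    using C_update sym_tensor_Cavg[OF f_Cp] unfolding s_def Y_def by (intro secant_update_pythagoras) auto
  moreover have Y_summable: "summable (\<lambda>k. frob p (Y k - Dp p f xs))"
    unfolding Y_def s_def by (rule summable_frob_Cavg_minus_Dp[OF f_Cp lip x_sum])
  ultimately have "(\<lambda>k. frob p (C k - C (Suc k))) \<longlonglongrightarrow> 0"
    using W_sum Ws_inv by (rule frob_secant_correction_tendsto_0)
  then have upper: "(\<lambda>k. frob p (C k - C (Suc k)) + frob p (Y k - Dp p f xs)) \<longlonglongrightarrow> 0"
    using summable_LIMSEQ_zero[OF Y_summable] by (rule tendsto_add_zero)
  have "frob (p - 1) (tapply (C k - Dp p f xs) (s k)) / norm (s k)
      \<le> frob p (C k - C (Suc k)) + frob p (Y k - Dp p f xs)" for k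
    using frob_tapply_secant_le[OF secant, of p "C k" "Dp p f xs"] steps p2
    by (simp add: s_def divide_le_eq mult.commute)
  then show ?thesis
    by (intro tendsto_sandwich[OF _ _ tendsto_const upper] always_eventually allI)
      (simp_all add: s_def frob_nonneg)
qed

end
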